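(* In the setting described in the context, for every $\theta\in\Theta$ and every POVM $M$, $F^M_\theta\le C_\Upsilon(\theta)$. Moreover, there exists a POVM $M$ (possibly depending on $\theta$) with $F^M_\theta=C_\Upsilon(\theta)$ if and only if $\langle w_j'(\theta)|w_k(\theta)\rangle=0$ for all $j,k$ with $p_j(\theta)>0$ and $p_k(\theta)>0$.
   Context: Let $\Theta\subseteq\mathbb{R}$ be an open interval and $D\ge1$. For $\theta\in\Theta$ let $\Phi_\theta$ be a quantum channel on $D\times D$ complex matrices and $\rho_0=|\psi_0\rangle\langle\psi_0|$ a fixed pure input state. Canonical Kraus operators are $D\times D$ matrices $\Upsilon_1(\theta),\dots,\Upsilon_D(\theta)$, differentiable in $\theta$, with $\sum_k\Upsilon_k^\dagger\Upsilon_k=\mathbb{I}$, $\Phi_\theta(\rho)=\sum_k\Upsilon_k\rho\Upsilon_k^\dagger$, and $\mathrm{tr}\{\Upsilon_k\rho_0\Upsilon_j^\dagger\}=\delta_{jk}p_k(\theta)$. Write $\Upsilon_k(\theta)|\psi_0\rangle=\sqrt{p_k(\theta)}|w_k(\theta)\rangle$ with $\{|w_k(\theta)\rangle\}$ an orthonormal basis of $\mathbb{C}^D$ differentiable in $\theta$; the output is $\rho_\theta=\sum_kp_k|w_k\rangle\langle w_k|$. Each $p_k$ is assumed either identically zero or strictly positive on $\Theta$. Primes denote $d/d\theta$. $C_\Upsilon(\theta)=4\sum_k\mathrm{tr}\{\Upsilon_k'\rho_0\Upsilon_k'^\dagger\}$. A POVM is a finite family $M=\{M_m\}$ of positive semidefinite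 $D\times D$ matrices with $\sum_mM_m=\mathbb{I}$; with $p(m;\theta)=\mathrm{tr}\{\rho_\theta M_m\}$, its Fisher information is $F^M_\theta=\sum_{m:\,p(m;\theta)>0}\frac{1}{p(m;\theta)}\bigl(\frac{dp(m;\theta)}{d\theta}\bigr)^2$. *)

theory Defs
  imports "HOL-Analysis.Analysis"
begin

text \<open>D x D complex matrices are modelled as complex^'n^'n with D = CARD('n).\<close>

definition cinner :: "complex^'n \<Rightarrow> complex^'n \<Rightarrow> complex" where
  "cinner x y = (\<Sum>i\<in>UNIV. cnj (x $ i) * y $ i)"

definition mat_adj :: "complex^'n^'n \<Rightarrow> complex^'n^'n" where
  "mat_adj A = (\<chi> i j. cnj (A $ j $ i))"

definition ket_bra :: "complex^'n \<Rightarrow> complex^'n \<Rightarrow> complex^'n^'n" where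
  "ket_bra x y = (\<chi> i j. x $ i * cnj (y $ j))"

definition hermitian :: "complex^'n^'n \<Rightarrow> bool" where
  "hermitian A \<longleftrightarrow> mat_adj A = A"

definition psd :: "complex^'n^'n \<Rightarrow> bool" where
  "psd A \<longleftrightarrow> hermitian A \<and> (\<forall>x. Im (cinner x (A *v x)) = 0 \<and> Re (cinner x (A *v x)) \<ge> 0)"

definition is_povm :: "nat \<Rightarrow> (nat \<Rightarrow> complex^'n^'n) \<Rightarrow> bool" where
  "is_povm N M \<longleftrightarrow> (\<forall>m<N. psd (M m)) \<and> (\<Sum>m<N. M m) = mat 1"

definition out_state :: "('n \<Rightarrow> complex^'n^'n) \<Rightarrow> complex^'n \<Rightarrow> complex^'n^'n" where
  "out_state Y psi0 = (\<Sum>k\<in>UNIV. Y k ** ket_bra psi0 psi0 ** mat_adj (Y k))"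

definition outcome_prob ::
  "(real \<Rightarrow> 'n \<Rightarrow> complex^'n^'n) \<Rightarrow> complex^'n \<Rightarrow> (nat \<Rightarrow> complex^'n^'n) \<Rightarrow> nat \<Rightarrow> real \<Rightarrow> real" where
  "outcome_prob Y psi0 M m t = Re (trace (out_state (Y t) psi0 ** M m))"

definition fisher_info ::
  "(real \<Rightarrow> 'n \<Rightarrow> complex^'n^'n) \<Rightarrow> complex^'n \<Rightarrow> nat \<Rightarrow> (nat \<Rightarrow> complex^'n^'n) \<Rightarrow> real \<Rightarrow> real" where
  "fisher_info Y psi0 N M \<theta> =
     (\<Sum>m\<in>{m. m < N \<and> outcome_prob Y psi0 M m \<theta> > 0}.
        (deriv (outcome_prob Y psi0 M m) \<theta>)\<^sup>2 / outcome_prob Y psi0 M m \<theta>)"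

text \<open>C_Upsilon(theta) = 4 sum_k tr(Y'_k rho0 Y'_k^dagger), Y' the derivatives at theta.\<close>
definition C_Ups :: "('n \<Rightarrow> complex^'n^'n) \<Rightarrow> complex^'n \<Rightarrow> real" where
  "C_Ups Y' psi0 = Re (4 * (\<Sum>k\<in>UNIV. trace (Y' k ** ket_bra psi0 psi0 ** mat_adj (Y' k))))"

end

theory Submission
  imports Defs
begin

text \<open>Write \<open>a\<^sub>k = \<Upsilon>\<^sub>k \<psi>\<^sub>0\<close> and \<open>b\<^sub>k = \<Upsilon>'\<^sub>k \<psi>\<^sub>0\<close>. The probability of outcome m is
  \<open>\<Sum>\<^sub>k \<langle>a\<^sub>k, M\<^sub>m a\<^sub>k\<rangle>\<close>, so by Cauchy-Schwarz for the positive semidefinite form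
  \<open>(x, y) \<mapsto> \<Sum>\<^sub>k Re \<langle>x\<^sub>k, M\<^sub>m y\<^sub>k\<rangle>\<close> each Fisher term is at most \<open>4 \<Sum>\<^sub>k \<langle>b\<^sub>k, M\<^sub>m b\<^sub>k\<rangle>\<close>;
  summing over the POVM gives \<open>C\<^sub>\<Upsilon>\<close>. Equality forces \<open>M\<^sub>m b\<^sub>k = s\<^sub>m M\<^sub>m a\<^sub>k\<close> with real
  \<open>s\<^sub>m\<close>, and such a POVM exists iff \<open>b\<^sub>k = L a\<^sub>k\<close> for a Hermitian L (take \<open>L = \<Sum>\<^sub>m s\<^sub>m M\<^sub>m\<close>,
  conversely the spectral POVM of L). As \<open>a\<^sub>k = \<surd>p\<^sub>k w\<^sub>k\<close> with \<open>w\<close> orthonormal, such an L exists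
  iff the Gram matrix \<open>\<langle>a\<^sub>j, b\<^sub>k\<rangle>\<close> is Hermitian, and differentiating \<open>a\<^sub>k = \<surd>p\<^sub>k w\<^sub>k\<close> and
  the orthonormality of \<open>w\<close> gives \<open>\<langle>a\<^sub>j, b\<^sub>k\<rangle> - \<langle>b\<^sub>j, a\<^sub>k\<rangle> = -2 \<surd>(p\<^sub>j p\<^sub>k) \<langle>w'\<^sub>j, w\<^sub>k\<rangle>\<close>.\<close>

section \<open>Complex inner product and matrices\<close>

lemma Re_cinner: "Re (cinner x y) = (x::complex^'n) \<bullet> y"
  by (simp add: cinner_def inner_vec_def inner_complex_def Re_sum)

lemma cinner_commute: "cinner x y = cnj (cinner y x)"
  by (simp add: cinner_def mult.commute)

lemma cinner_add_left: "cinner (x + y) z = cinner x z + cinner y z"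
  by (simp add: cinner_def distrib_right sum.distrib)

lemma cinner_add_right: "cinner x (y + z) = cinner x y + cinner x z"
  by (simp add: cinner_def distrib_left sum.distrib)

lemma cinner_smult_left: "cinner (c *s x) y = cnj c * cinner x y"
  by (simp add: cinner_def sum_distrib_left ac_simps)

lemma cinner_smult_right: "cinner x (c *s y) = c * cinner x y"
  by (simp add: cinner_def sum_distrib_left ac_simps)

lemma scaleR_eq_smult: "r *\<^sub>R (x::complex^'n) = of_real r *s x"
  by (vector scaleR_conv_of_real)

lemma cinner_scaleR_left: "cinner (r *\<^sub>R x) y = of_real r * cinner x y"
  by (simp add: scaleR_eq_smult cinner_smult_left)

lemma cinner_scaleR_right: "cinner x (r *\<^sub>R y) = of_real r * cinner x y"
  by (simp add: scaleR_eq_smult cinner_smult_right)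

lemma cinner_adj: "cinner x (A *v y) = cinner (mat_adj A *v x) y"
proof -
  have "cinner x (A *v y) = (\<Sum>i\<in>UNIV. \<Sum>j\<in>UNIV. cnj (x $ i) * A $ i $ j * y $ j)"
    unfolding cinner_def matrix_vector_mult_def by (simp add: sum_distrib_left mult.assoc)
  also have "\<dots> = (\<Sum>j\<in>UNIV. \<Sum>i\<in>UNIV. cnj (x $ i) * A $ i $ j * y $ j)"
    by (rule sum.swap)
  also have "\<dots> = cinner (mat_adj A *v x) y"
    unfolding cinner_def mat_adj_def matrix_vector_mult_def
    by (simp add: sum_distrib_right sum_distrib_left cnj_sum mult.commute mult.left_commute)
  finally show ?thesis .
qed

lemma Im_cinner: "Im (cinner x y) = x \<bullet> ((-\<i>) *s y)"
proof -
  have "cinner x ((-\<i>) *s y) = (-\<i>) * cinner x y"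
    by (rule cinner_smult_right)
  then have "Im (cinner x y) = Re (cinner x ((-\<i>) *s y))"
    by simp
  then show ?thesis
    by (simp only: Re_cinner)
qed

lemma cinner_has_vector_derivative:
  fixes x y :: "real \<Rightarrow> complex^'n"
  assumes "(x has_vector_derivative x') (at t)" and "(y has_vector_derivative y') (at t)"
  shows "((\<lambda>s. cinner (x s) (y s)) has_vector_derivative (cinner x' (y t) + cinner (x t) y')) (at t)"
proof -
  have "((\<lambda>s. \<Sum>i\<in>UNIV. cnj (x s $ i) * y s $ i) has_vector_derivative
      (\<Sum>i\<in>UNIV. cnj (x t $ i) * y' $ i + cnj (x' $ i) * y t $ i)) (at t)"
    by (intro has_vector_derivative_sum has_vector_derivative_mult
        bounded_linear.has_vector_derivative[OF bounded_linear_cnj]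
        bounded_linear.has_vector_derivative[OF bounded_linear_vec_nth] assms)
  then show ?thesis
    unfolding cinner_def by (simp add: sum.distrib add.commute)
qed

lemma mat_adj_add: "mat_adj (A + B) = mat_adj A + mat_adj B"
  by (simp add: mat_adj_def vec_eq_iff)

lemma mat_adj_diff: "mat_adj (A - B) = mat_adj A - mat_adj B"
  by (simp add: mat_adj_def vec_eq_iff)

lemma mat_adj_scaleR: "mat_adj (r *\<^sub>R A) = r *\<^sub>R mat_adj A"
  by (simp add: mat_adj_def vec_eq_iff)

lemma mat_adj_sum: "mat_adj (sum f S) = (\<Sum>i\<in>S. mat_adj (f i))"
  by (induct S rule: infinite_finite_induct) (auto simp: mat_adj_def vec_eq_iff)

lemma mat_adj_ket_bra: "mat_adj (ket_bra x y) = ket_bra y x"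
  by (simp add: mat_adj_def ket_bra_def vec_eq_iff)

lemma ket_bra_smult_right: "ket_bra x (c *s y) = ket_bra (cnj c *s x) y"
  by (simp add: ket_bra_def vec_eq_iff ac_simps)

lemma ket_bra_mult_vec: "ket_bra x y *v v = cinner y v *s x"
  by (simp add: ket_bra_def cinner_def matrix_vector_mult_def vec_eq_iff sum_distrib_left ac_simps)

lemma matrix_mult_ket_bra: "A ** ket_bra x y = ket_bra (A *v x) y"
  by (simp add: ket_bra_def matrix_matrix_mult_def matrix_vector_mult_def vec_eq_iff
      sum_distrib_left sum_distrib_right mult.assoc)

lemma ket_bra_matrix_mult: "ket_bra x y ** B = ket_bra x (mat_adj B *v y)"
  by (simp add: ket_bra_def mat_adj_def matrix_matrix_mult_def matrix_vector_mult_def vec_eq_iff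
      sum_distrib_left cnj_sum ac_simps)

lemma trace_ket_bra: "trace (ket_bra x y) = cinner y x"
  by (simp add: trace_def ket_bra_def cinner_def ac_simps)

lemma trace_sum: "trace (sum f S) = (\<Sum>i\<in>S. trace (f i))"
  by (simp add: trace_def sum.swap[of _ UNIV S])

lemma sum_matrix_mult: "sum f S ** B = (\<Sum>i\<in>S. f i ** B)"
  by (induct S rule: infinite_finite_induct)
    (simp_all add: matrix_matrix_mult_def vec_eq_iff distrib_right sum.distrib)

lemma sum_matrix_vector_mult: "sum f S *v x = (\<Sum>i\<in>S. f i *v x)"
  by (induct S rule: infinite_finite_induct) (auto simp: matrix_vector_mult_add_rdistrib)

lemma scaleR_matrix_vector_mult: "((r::real) *\<^sub>R (A::complex^'n^'n)) *v x = r *\<^sub>R (A *v x)"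
  by (simp add: scaleR_eq_smult vec_eq_iff matrix_vector_mult_def sum_distrib_left ac_simps)

lemma matrix_vector_mult_scaleR_complex: "(A::complex^'n^'n) *v (r *\<^sub>R x) = r *\<^sub>R (A *v x)"
  using linear_scale[OF matrix_vector_mul_linear] .

lemma hermitian_inner_commute: "hermitian A \<Longrightarrow> (A *v x) \<bullet> y = x \<bullet> (A *v y)"
  by (metis Re_cinner cinner_adj hermitian_def cinner_commute complex_cnj_cnj cnj.sel(1))

lemma psd_inner_nonneg: "psd M \<Longrightarrow> 0 \<le> x \<bullet> (M *v x)"
  unfolding psd_def by (metis Re_cinner)

lemma psd_hermitian: "psd M \<Longrightarrow> hermitian M"
  unfolding psd_def by simp

lemma mat_adj_mat_adj [simp]: "mat_adj (mat_adj A) = A"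
  by (simp add: mat_adj_def vec_eq_iff)

lemma conjugate_ket_bra: "A ** ket_bra x x ** mat_adj A = ket_bra (A *v x) (A *v x)"
  by (simp add: matrix_mult_ket_bra ket_bra_matrix_mult)

lemma Re_trace_ket_bra_mult: "Re (trace (ket_bra x x ** M)) = x \<bullet> (M *v x)"
  by (simp add: ket_bra_matrix_mult trace_ket_bra Re_cinner[symmetric] cinner_adj[symmetric])

lemma bounded_linear_matrix_vector_mult_left: "bounded_linear (\<lambda>A::complex^'n^'n. A *v x)"
proof -
  have "linear (\<lambda>A::complex^'n^'n. A *v x)"
    by (rule linearI) (simp_all add: matrix_vector_mult_add_rdistrib scaleR_matrix_vector_mult)
  then show ?thesis
    by (simp add: linear_conv_bounded_linear)
qed

section \<open>Positive semidefinite forms\<close>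

lemma nonneg_quadratic_discriminant:
  fixes A B C :: real
  assumes nonneg: "\<And>t. 0 \<le> A + 2*t*B + t^2*C" and "0 \<le> C"
  shows "B^2 \<le> A*C"
proof (cases "C = 0")
  case True
  have "B = 0"
  proof (rule ccontr)
    assume "B \<noteq> 0"
    have "0 \<le> A + 2*(-(A+1)/(2*B))*B"
      using nonneg[of "-(A+1)/(2*B)"] True by simp
    also have "\<dots> = -1"
      using \<open>B \<noteq> 0\<close> by (simp add: field_simps)
    finally show False by simp
  qed
  then show ?thesis using True by simp
next
  case False
  with \<open>0 \<le> C\<close> have "C > 0" by simp
  have "0 \<le> A + 2*(-B/C)*B + (-B/C)^2*C" by (rule nonneg)
  also have "\<dots> = (A*C - B^2)/C"
    using \<open>C > 0\<close> by (simp add: field_simps power2_eq_square)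
  finally show ?thesis
    using \<open>C > 0\<close> by (simp add: zero_le_divide_iff)
qed

definition pairing :: "complex^'n^'n \<Rightarrow> ('k \<Rightarrow> complex^'n) \<Rightarrow> ('k \<Rightarrow> complex^'n) \<Rightarrow> real" where
  "pairing M a b = (\<Sum>k\<in>UNIV. a k \<bullet> (M *v b k))"

lemma pairing_commute: "hermitian M \<Longrightarrow> pairing M a b = pairing M b a"
  unfolding pairing_def by (metis hermitian_inner_commute inner_commute)

lemma pairing_self_nonneg: "psd M \<Longrightarrow> 0 \<le> pairing M a a"
  unfolding pairing_def by (intro sum_nonneg psd_inner_nonneg)

lemma pairing_proportional:
  assumes "\<And>k. M *v b k = s *\<^sub>R (M *v a k)"
  shows "pairing M c b = s * pairing M c a"
  unfolding pairing_def by (simp add: assms sum_distrib_left)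

lemma hermitian_inner_add_scaleR:
  assumes "hermitian M"
  shows "(x + t *\<^sub>R y) \<bullet> (M *v (x + t *\<^sub>R y))
    = x \<bullet> (M *v x) + 2*t*(x \<bullet> (M *v y)) + t^2 * (y \<bullet> (M *v y))"
proof -
  have "y \<bullet> (M *v x) = x \<bullet> (M *v y)"
    using hermitian_inner_commute[OF assms, of y x] by (simp add: inner_commute)
  then show ?thesis
    by (simp add: matrix_vector_right_distrib matrix_vector_mult_scaleR_complex inner_add_left
        inner_add_right power2_eq_square algebra_simps)
qed

lemma pairing_self_add_scaleR:
  assumes "hermitian M"
  shows "pairing M (\<lambda>k. a k + t *\<^sub>R b k) (\<lambda>k. a k + t *\<^sub>R b k)
    = pairing M a a + 2*t*pairing M a b + t^2 * pairing M b b"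
  unfolding pairing_def hermitian_inner_add_scaleR[OF assms]
  by (simp add: sum.distrib sum_distrib_left)

lemma pairing_cauchy_schwarz:
  fixes a b :: "'k::finite \<Rightarrow> complex^'n"
  assumes "psd M"
  shows "(pairing M a b)^2 \<le> pairing M a a * pairing M b b"
proof (rule nonneg_quadratic_discriminant)
  fix t
  show "0 \<le> pairing M a a + 2*t*pairing M a b + t^2 * pairing M b b"
    using pairing_self_nonneg[OF assms, of "\<lambda>k. a k + t *\<^sub>R b k"]
      pairing_self_add_scaleR[OF psd_hermitian[OF assms], of a t b]
    by simp
qed (rule pairing_self_nonneg[OF assms])

lemma pairing_self_eq_0:
  fixes a :: "'k::finite \<Rightarrow> complex^'n"
  assumes "psd M" "pairing M a a = 0"
  shows "M *v a k = 0"
proof -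
  have "(pairing M (\<lambda>k. M *v a k) a)^2 \<le> 0"
    using pairing_cauchy_schwarz[OF assms(1), of "\<lambda>k. M *v a k" a] assms(2) by simp
  then have "(\<Sum>k\<in>UNIV. (M *v a k) \<bullet> (M *v a k)) = 0"
    unfolding pairing_def by simp
  then show ?thesis
    by (simp add: sum_nonneg_eq_0_iff)
qed

lemma pairing_cauchy_schwarz_eq_iff:
  fixes a b :: "'k::finite \<Rightarrow> complex^'n"
  assumes "psd M" and "0 < pairing M a a"
  shows "(pairing M a b)^2 = pairing M a a * pairing M b b
    \<longleftrightarrow> (\<exists>s::real. \<forall>k. M *v b k = s *\<^sub>R (M *v a k))"
proof
  assume eq: "(pairing M a b)^2 = pairing M a a * pairing M b b"
  define s where "s = pairing M a b / pairing M a a"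
  have "pairing M (\<lambda>k. b k + (-s) *\<^sub>R a k) (\<lambda>k. b k + (-s) *\<^sub>R a k)
      = pairing M b b - 2 * s * pairing M a b + s^2 * pairing M a a"
    using pairing_self_add_scaleR[OF psd_hermitian[OF assms(1)], of b "-s" a]
      pairing_commute[OF psd_hermitian[OF assms(1)], of b a]
    by simp
  also have "\<dots> = 0"
    using eq assms(2) unfolding s_def by (simp add: field_simps power2_eq_square)
  finally have "M *v (b k + (-s) *\<^sub>R a k) = 0" for k
    by (rule pairing_self_eq_0[OF assms(1)])
  then have "M *v b k = s *\<^sub>R (M *v a k)" for k
    by (simp add: matrix_vector_mult_diff_distrib matrix_vector_mult_scaleR_complex)
  then show "\<exists>s::real. \<forall>k. M *v b k = s *\<^sub>R (M *v a k)" by blast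
next
  assume "\<exists>s::real. \<forall>k. M *v b k = s *\<^sub>R (M *v a k)"
  then obtain s where s: "\<And>k. M *v b k = s *\<^sub>R (M *v a k)" by blast
  have "pairing M a b = s * pairing M a a"
    by (rule pairing_proportional[OF s])
  moreover have "pairing M b b = s^2 * pairing M a a"
    using pairing_proportional[OF s, of b] pairing_commute[OF psd_hermitian[OF assms(1)], of b a]
      pairing_proportional[OF s, of a]
    by (simp add: power2_eq_square)
  ultimately show "(pairing M a b)^2 = pairing M a a * pairing M b b"
    by (simp add: power2_eq_square)
qed

section \<open>Spectral theorem for self-adjoint maps\<close>

lemma quadratic_nonpos_linear_coeff_eq_0:
  fixes c d :: real
  assumes nonpos: "\<And>t. 2*t*c + t^2*d \<le> 0"
  shows "c = 0"
proof -
  have "d \<le> 0"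
    using nonpos[of 1] nonpos[of "-1"] by simp
  have "(-c)^2 \<le> 0 * (-d)"
  proof (rule nonneg_quadratic_discriminant)
    fix t :: real
    show "0 \<le> 0 + 2*t*(-c) + t^2*(-d)"
      using nonpos[of t] by linarith
  qed (use \<open>d \<le> 0\<close> in simp)
  then show ?thesis by simp
qed

lemma rayleigh_maximizer_orthogonal:
  fixes f :: "'a::euclidean_space \<Rightarrow> 'a"
  assumes lf: "linear f" and sa: "\<And>x y. f x \<bullet> y = x \<bullet> f y"
    and W: "subspace W" and eW: "e \<in> W" and en: "norm e = 1"
    and max: "\<And>v. v \<in> W \<Longrightarrow> norm v = 1 \<Longrightarrow> v \<bullet> f v \<le> e \<bullet> f e"
    and yW: "y \<in> W" and ey: "e \<bullet> y = 0"
  shows "y \<bullet> f e = 0"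
proof (rule quadratic_nonpos_linear_coeff_eq_0)
  fix t :: real
  define v where "v = e + t *\<^sub>R y"
  define l where "l = e \<bullet> f e"
  have ee: "e \<bullet> e = 1"
    using en by (simp add: norm_eq_1)
  have vv: "v \<bullet> v = 1 + t^2 * (y \<bullet> y)"
    unfolding v_def using ee ey
    by (simp add: inner_add_left inner_add_right inner_commute power2_eq_square)
  then have "v \<bullet> v > 0"
    by (simp add: add_pos_nonneg)
  then have nv: "norm v > 0"
    by simp
  have "v \<in> W"
    unfolding v_def using eW yW W by (simp add: subspace_add subspace_scale)
  then have "((1/norm v) *\<^sub>R v) \<bullet> f ((1/norm v) *\<^sub>R v) \<le> l"
    unfolding l_def using W nv by (intro max) (simp_all add: subspace_scale)
  then have "v \<bullet> f v \<le> l * (v \<bullet> v)"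
    using nv by (simp add: linear_cmul[OF lf] field_simps power2_norm_eq_inner[symmetric]
        power2_eq_square)
  moreover have "v \<bullet> f v = l + 2*t*(y \<bullet> f e) + t^2*(y \<bullet> f y)"
    unfolding v_def l_def using sa[of e y]
    by (simp add: linear_add[OF lf] linear_cmul[OF lf] inner_add_left inner_add_right
        power2_eq_square algebra_simps inner_commute)
  ultimately show "2*t*(y \<bullet> f e) + t^2*(y \<bullet> f y - l * (y \<bullet> y)) \<le> 0"
    using vv by (simp add: algebra_simps)
qed

lemma self_adjoint_eigenvector_in_subspace:
  fixes f :: "'a::euclidean_space \<Rightarrow> 'a"
  assumes lf: "linear f" and sa: "\<And>x y. f x \<bullet> y = x \<bullet> f y"
    and W: "subspace W" and inv: "f ` W \<subseteq> W" and nz: "\<not> W \<subseteq> {0}"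
  obtains e c where "e \<in> W" "norm e = 1" "f e = c *\<^sub>R e"
proof -
  define K where "K = W \<inter> sphere 0 1"
  obtain x where x: "x \<in> W" "x \<noteq> 0"
    using nz by auto
  have "(1/norm x) *\<^sub>R x \<in> K"
    unfolding K_def using x W by (simp add: subspace_scale norm_sgn)
  moreover have "compact K"
    unfolding K_def by (intro closed_Int_compact closed_subspace W compact_sphere)
  moreover have "continuous_on K (\<lambda>x. x \<bullet> f x)"
    using lf by (intro continuous_on_inner continuous_on_id linear_continuous_on)
      (simp add: linear_conv_bounded_linear)
  ultimately obtain e where eK: "e \<in> K" and max: "\<And>v. v \<in> K \<Longrightarrow> v \<bullet> f v \<le> e \<bullet> f e"
    using continuous_attains_sup[of K "\<lambda>x. x \<bullet> f x"] by blast
  have eW: "e \<in> W" and en: "norm e = 1"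
    using eK unfolding K_def by auto
  define z where "z = f e - (e \<bullet> f e) *\<^sub>R e"
  have "z \<in> W"
    unfolding z_def using inv eW W by (auto simp: subspace_diff subspace_scale)
  moreover have "e \<bullet> z = 0"
    unfolding z_def using en by (simp add: inner_diff_right norm_eq_1)
  ultimately have "z \<bullet> f e = 0"
    using rayleigh_maximizer_orthogonal[OF lf sa W eW en] max unfolding K_def by simp
  with \<open>e \<bullet> z = 0\<close> have "z \<bullet> z = 0"
    unfolding z_def by (simp add: inner_diff_left inner_commute)
  then have "f e = (e \<bullet> f e) *\<^sub>R e"
    unfolding z_def by simp
  with eW en that show ?thesis by blast
qed

lemma self_adjoint_invariant_orthogonal_complement:
  fixes f :: "'a::real_inner \<Rightarrow> 'a"
  assumes sa: "\<And>x y. f x \<bullet> y = x \<bullet> f y" and "f e = c *\<^sub>R e" and "f ` W \<subseteq> W"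
  shows "f ` (W \<inter> {x. e \<bullet> x = 0}) \<subseteq> W \<inter> {x. e \<bullet> x = 0}"
proof -
  have "e \<bullet> f x = c * (e \<bullet> x)" for x
    using sa[of e x] assms(2) by simp
  then show ?thesis
    using assms(3) by auto
qed

lemma subspace_subset_span_insert_orthogonal_complement:
  fixes e :: "'a::real_inner"
  assumes "subspace W" "e \<in> W" "e \<bullet> e = 1" "W \<inter> {x. e \<bullet> x = 0} \<subseteq> span B"
  shows "W \<subseteq> span (insert e B)"
proof
  fix x assume "x \<in> W"
  then have "x - (e \<bullet> x) *\<^sub>R e \<in> W \<inter> {x. e \<bullet> x = 0}"
    using assms(1-3) by (simp add: subspace_diff subspace_scale inner_diff_right)
  then have "x - (e \<bullet> x) *\<^sub>R e \<in> span (insert e B)"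
    using assms(4) by (meson span_mono subset_insertI subsetD)
  moreover have "(e \<bullet> x) *\<^sub>R e \<in> span (insert e B)"
    by (simp add: span_base span_scale)
  ultimately have "(x - (e \<bullet> x) *\<^sub>R e) + (e \<bullet> x) *\<^sub>R e \<in> span (insert e B)"
    by (rule span_add)
  then show "x \<in> span (insert e B)"
    by simp
qed

lemma self_adjoint_orthonormal_eigenbasis_subspace:
  fixes f :: "'a::euclidean_space \<Rightarrow> 'a"
  assumes lf: "linear f" and sa: "\<And>x y. f x \<bullet> y = x \<bullet> f y"
  shows "subspace W \<Longrightarrow> f ` W \<subseteq> W \<Longrightarrow> \<exists>B. finite B \<and> B \<subseteq> W \<and> pairwise orthogonal B \<and>
           (\<forall>e\<in>B. norm e = 1 \<and> (\<exists>c. f e = c *\<^sub>R e)) \<and> W \<subseteq> span B"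
proof (induct "dim W" arbitrary: W rule: less_induct)
  case less
  show ?case
  proof (cases "W \<subseteq> {0}")
    case True
    then show ?thesis by (intro exI[of _ "{}"]) (auto simp: span_zero)
  next
    case False
    obtain e c where eW: "e \<in> W" and en: "norm e = 1" and c: "f e = c *\<^sub>R e"
      using self_adjoint_eigenvector_in_subspace[OF lf sa less.prems False] by blast
    have ee: "e \<bullet> e = 1"
      using en by (simp add: norm_eq_1)
    define W' where "W' = W \<inter> {x. e \<bullet> x = 0}"
    have sW': "subspace W'"
      unfolding W'_def by (intro subspace_inter less.prems(1) subspace_hyperplane)
    have "W' \<subset> W"
      using eW ee unfolding W'_def by force
    then have "dim W' < dim W"
      using sW' less.prems(1) by (metis dim_psubset span_eq_iff)
    then obtain B' where B': "finite B'" "B' \<subseteq> W'" "pairwise orthogonal B'"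
      "\<forall>e\<in>B'. norm e = 1 \<and> (\<exists>c. f e = c *\<^sub>R e)" "W' \<subseteq> span B'"
      using less.hyps[OF _ sW'] self_adjoint_invariant_orthogonal_complement[OF sa c less.prems(2)]
      unfolding W'_def by blast
    have "pairwise orthogonal (insert e B')"
      using B'(2,3) unfolding pairwise_def orthogonal_def W'_def by (auto simp: inner_commute)
    moreover have "W \<subseteq> span (insert e B')"
      using subspace_subset_span_insert_orthogonal_complement[OF less.prems(1) eW ee] B'(5)
      unfolding W'_def by blast
    ultimately show ?thesis
      using B' eW en c unfolding W'_def by (intro exI[of _ "insert e B'"]) auto
  qed
qed

lemma self_adjoint_eigenbasis:
  fixes f :: "'a::euclidean_space \<Rightarrow> 'a"
  assumes "linear f" and "\<And>x y. f x \<bullet> y = x \<bullet> f y"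
  obtains B where "finite B" and "\<forall>e\<in>B. \<exists>c. f e = c *\<^sub>R e"
    and "\<And>x. (\<Sum>e\<in>B. (x \<bullet> e) *\<^sub>R e) = x"
proof -
  obtain B where B: "finite B" "pairwise orthogonal B" "\<forall>e\<in>B. norm e = 1 \<and> (\<exists>c. f e = c *\<^sub>R e)"
    "UNIV \<subseteq> span B"
    using self_adjoint_orthonormal_eigenbasis_subspace[OF assms, of UNIV] by auto
  then show ?thesis
    by (intro that[of B]) (use orthonormal_basis_expand[OF B(2)] in auto)
qed

section \<open>Hermitian maps and POVMs\<close>

lemma smult_eq_Re_Im: "(z::complex) *s (v::complex^'n) = Re z *\<^sub>R v + Im z *\<^sub>R (\<i> *s v)"
  by (simp add: vec_eq_iff scaleR_eq_smult) (simp add: complex_eq_iff algebra_simps)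

lemma smult_scaleR_commute: "(z::complex) *s ((r::real) *\<^sub>R v) = r *\<^sub>R (z *s (v::complex^'n))"
  by (simp add: scaleR_eq_smult vec_eq_iff ac_simps)

lemma linear_smult: "linear (\<lambda>v::complex^'n. z *s v)"
  by (rule linearI) (simp_all add: vec_eq_iff distrib_left smult_scaleR_commute)

text \<open>B is orthonormal only for the real inner product. The real and imaginary parts of
  \<open>cinner e x\<close> give the real expansions of x and of \<open>-\<i> x\<close>, so the sum is
  \<open>x + \<i> (-\<i> x) = 2 x\<close>; this is why the spectral POVM below carries the weight 1/2.\<close>

lemma real_orthonormal_expansion_complex:
  fixes B :: "(complex^'n) set"
  assumes expand: "\<And>x. (\<Sum>e\<in>B. (x \<bullet> e) *\<^sub>R e) = x"
  shows "(\<Sum>e\<in>B. cinner e x *s e) = 2 *\<^sub>R x"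
proof -
  have "(\<Sum>e\<in>B. cinner e x *s e)
      = (\<Sum>e\<in>B. (x \<bullet> e) *\<^sub>R e) + (\<Sum>e\<in>B. (((-\<i>) *s x) \<bullet> e) *\<^sub>R (\<i> *s e))"
    by (simp add: smult_eq_Re_Im[of "cinner _ x"] Re_cinner Im_cinner inner_commute sum.distrib
        sum_subtractf sum_negf)
  also have "(\<Sum>e\<in>B. (((-\<i>) *s x) \<bullet> e) *\<^sub>R (\<i> *s e))
      = \<i> *s (\<Sum>e\<in>B. (((-\<i>) *s x) \<bullet> e) *\<^sub>R e)"
    by (simp add: linear_sum[OF linear_smult] smult_scaleR_commute o_def)
  also have "\<dots> = x"
    by (simp only: expand) (simp add: vector_smult_assoc)
  finally show ?thesis
    by (simp add: expand scaleR_2)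
qed

lemma psd_scaleR_ket_bra_self:
  assumes "0 \<le> r"
  shows "psd (r *\<^sub>R ket_bra e e)"
proof -
  have quad: "cinner x ((r *\<^sub>R ket_bra e e) *v x) = of_real (r * (cmod (cinner e x))^2)" for x
  proof -
    have "cinner x ((r *\<^sub>R ket_bra e e) *v x) = of_real r * (cinner e x * cnj (cinner e x))"
      by (simp add: scaleR_matrix_vector_mult ket_bra_mult_vec cinner_scaleR_right cinner_smult_right
          cinner_commute[of x e] ac_simps)
    then show ?thesis
      by (simp add: complex_mult_cnj cmod_power2)
  qed
  show ?thesis
    unfolding psd_def hermitian_def quad
    using assms by (simp add: mat_adj_scaleR mat_adj_ket_bra)
qed

lemma hermitian_spectral_povm:
  fixes L :: "complex^'n^'n"
  assumes "hermitian L"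
  obtains N M where "is_povm N M" and "\<forall>m<N. \<exists>s::real. \<forall>x. M m *v (L *v x) = s *\<^sub>R (M m *v x)"
proof -
  obtain B where "finite B" and eig: "\<forall>e\<in>B. \<exists>c. L *v e = c *\<^sub>R e"
      and expand: "\<And>x. (\<Sum>e\<in>B. (x \<bullet> e) *\<^sub>R e) = x"
    using self_adjoint_eigenbasis[OF matrix_vector_mul_linear, of L]
      hermitian_inner_commute[OF assms] by blast
  obtain g where g: "bij_betw g {..<card B} B"
    using ex_bij_betw_nat_finite[OF \<open>finite B\<close>] by (auto simp: atLeast0LessThan)
  define M where "M m = (1/2::real) *\<^sub>R ket_bra (g m) (g m)" for m
  have "(\<Sum>m<card B. M m) *v x = x" for x
  proof -
    have "(\<Sum>m<card B. M m) *v x = (\<Sum>m<card B. (1/2::real) *\<^sub>R (cinner (g m) x *s g m))"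
      unfolding M_def by (simp add: sum_matrix_vector_mult scaleR_matrix_vector_mult ket_bra_mult_vec)
    also have "\<dots> = (\<Sum>e\<in>B. (1/2::real) *\<^sub>R (cinner e x *s e))"
      by (rule sum.reindex_bij_betw[OF g])
    also have "\<dots> = (1/2::real) *\<^sub>R (\<Sum>e\<in>B. cinner e x *s e)"
      by (simp add: scaleR_sum_right)
    also have "\<dots> = x"
      by (simp add: real_orthonormal_expansion_complex[OF expand])
    finally show ?thesis .
  qed
  then have "is_povm (card B) M"
    unfolding is_povm_def M_def by (simp add: psd_scaleR_ket_bra_self matrix_eq)
  moreover have "\<exists>s::real. \<forall>x. M m *v (L *v x) = s *\<^sub>R (M m *v x)" if m: "m < card B" for m
  proof -
    obtain c where c: "L *v g m = c *\<^sub>R g m"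
      using eig g m by (auto simp: bij_betw_def)
    have "cinner (g m) (L *v x) = of_real c * cinner (g m) x" for x
      using cinner_adj[of "g m" L x] assms by (simp add: hermitian_def c cinner_scaleR_left)
    then show ?thesis
      by (intro exI[of _ c]) (simp add: M_def scaleR_matrix_vector_mult ket_bra_mult_vec scaleR_eq_smult
          vector_smult_assoc ac_simps)
  qed
  ultimately show ?thesis
    using that by blast
qed

lemma ex_povm_proportional_iff_ex_hermitian:
  fixes a b :: "'k \<Rightarrow> complex^'n"
  shows "(\<exists>N M. is_povm N M \<and> (\<forall>m<N. \<exists>s::real. \<forall>k. M m *v b k = s *\<^sub>R (M m *v a k)))
     \<longleftrightarrow> (\<exists>L. hermitian L \<and> (\<forall>k. L *v a k = b k))"
proof
  assume "\<exists>N M. is_povm N M \<and> (\<forall>m<N. \<exists>s::real. \<forall>k. M m *v b k = s *\<^sub>R (M m *v a k))"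
  then obtain N M s where P: "is_povm N M"
    and s: "\<And>m k. m < N \<Longrightarrow> M m *v b k = s m *\<^sub>R (M m *v a k)"
    by metis
  define L where "L = (\<Sum>m<N. s m *\<^sub>R M m)"
  have "hermitian L"
    using P unfolding L_def hermitian_def is_povm_def psd_def
    by (simp add: mat_adj_sum mat_adj_scaleR)
  moreover have "L *v a k = b k" for k
  proof -
    have "L *v a k = (\<Sum>m<N. M m) *v b k"
      unfolding L_def by (simp add: sum_matrix_vector_mult scaleR_matrix_vector_mult s)
    then show ?thesis
      using P by (simp add: is_povm_def)
  qed
  ultimately show "\<exists>L. hermitian L \<and> (\<forall>k. L *v a k = b k)"
    by blast
next
  assume "\<exists>L. hermitian L \<and> (\<forall>k. L *v a k = b k)"
  then obtain L where "hermitian L" and La: "\<And>k. L *v a k = b k"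
    by blast
  obtain N M where "is_povm N M" and "\<forall>m<N. \<exists>s::real. \<forall>x. M m *v (L *v x) = s *\<^sub>R (M m *v x)"
    using hermitian_spectral_povm[OF \<open>hermitian L\<close>] by blast
  then show "\<exists>N M. is_povm N M \<and> (\<forall>m<N. \<exists>s::real. \<forall>k. M m *v b k = s *\<^sub>R (M m *v a k))"
    by (metis La)
qed

lemma hermitian_extension_orthonormal:
  fixes w c :: "'k::finite \<Rightarrow> complex^'n"
  assumes orth: "\<And>j k. cinner (w j) (w k) = (if j = k then 1 else 0)"
    and sym: "\<And>j k. j \<in> S \<Longrightarrow> k \<in> S \<Longrightarrow> cinner (w j) (c k) = cinner (c j) (w k)"
  obtains L where "hermitian L" and "\<And>k. k \<in> S \<Longrightarrow> L *v w k = c k"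
proof -
  define G where "G = (\<Sum>j\<in>S. \<Sum>k\<in>S. ket_bra (cinner (w j) (c k) *s w j) (w k))"
  define L where "L = (\<Sum>k\<in>S. ket_bra (c k) (w k)) + (\<Sum>k\<in>S. ket_bra (w k) (c k)) - G"
  have "mat_adj G = (\<Sum>j\<in>S. \<Sum>k\<in>S. ket_bra (cinner (w k) (c j) *s w k) (w j))"
    unfolding G_def mat_adj_sum mat_adj_ket_bra ket_bra_smult_right
    by (intro sum.cong refl) (metis cinner_commute sym)
  also have "\<dots> = G"
    unfolding G_def by (rule sum.swap)
  finally have "hermitian L"
    unfolding hermitian_def L_def
    by (simp add: mat_adj_add mat_adj_diff mat_adj_sum mat_adj_ket_bra add.commute)
  moreover have "L *v w k0 = c k0" if k0: "k0 \<in> S" for k0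
  proof -
    have delta: "(if P then 1 else 0) *s v = (if P then v else 0)"
      "(if P then 1 else 0) * z = (if P then z else 0)"
      "(if P then z else 0) *s v = (if P then z *s v else 0)"
      for P z and v :: "complex^'n"
      by simp_all
    have "(\<Sum>k\<in>S. ket_bra (c k) (w k)) *v w k0 = c k0"
      using k0 by (simp add: sum_matrix_vector_mult ket_bra_mult_vec orth delta)
    moreover have "(\<Sum>k\<in>S. ket_bra (w k) (c k)) *v w k0 = (\<Sum>k\<in>S. cinner (w k) (c k0) *s w k)"
      using k0 by (simp add: sum_matrix_vector_mult ket_bra_mult_vec sym)
    moreover have "G *v w k0 = (\<Sum>j\<in>S. cinner (w j) (c k0) *s w j)"
      using k0 by (simp add: G_def sum_matrix_vector_mult ket_bra_mult_vec orth delta)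
    ultimately show ?thesis
      unfolding L_def by (simp add: matrix_vector_mult_add_rdistrib matrix_vector_mult_diff_rdistrib)
  qed
  ultimately show ?thesis
    using that by blast
qed

lemma ex_hermitian_map_iff:
  fixes w a b :: "'k::finite \<Rightarrow> complex^'n" and s :: "'k \<Rightarrow> real"
  assumes orth: "\<And>j k. cinner (w j) (w k) = (if j = k then 1 else 0)"
    and a: "\<And>k. a k = s k *\<^sub>R w k"
    and b: "\<And>k. s k = 0 \<Longrightarrow> b k = 0"
  shows "(\<exists>L. hermitian L \<and> (\<forall>k. L *v a k = b k))
    \<longleftrightarrow> (\<forall>j k. cinner (a j) (b k) = cinner (b j) (a k))"
proof
  assume "\<exists>L. hermitian L \<and> (\<forall>k. L *v a k = b k)"
  then show "\<forall>j k. cinner (a j) (b k) = cinner (b j) (a k)"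
    by (metis cinner_adj hermitian_def)
next
  assume gram: "\<forall>j k. cinner (a j) (b k) = cinner (b j) (a k)"
  define c where "c k = (1 / s k) *\<^sub>R b k" for k
  have "cinner (w j) (c k) = cinner (c j) (w k)" if "s j \<noteq> 0" "s k \<noteq> 0" for j k
    using gram that unfolding c_def a
    by (simp add: cinner_scaleR_left cinner_scaleR_right field_simps)
  then obtain L where "hermitian L" and Lw: "\<And>k. s k \<noteq> 0 \<Longrightarrow> L *v w k = c k"
    using hermitian_extension_orthonormal[OF orth, of "{k. s k \<noteq> 0}" c] by auto
  moreover have "L *v a k = b k" for k
    using Lw[of k] b[of k] by (cases "s k = 0") (simp_all add: a c_def matrix_vector_mult_scaleR_complex)
  ultimately show "\<exists>L. hermitian L \<and> (\<forall>k. L *v a k = b k)"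
    by blast
qed

section \<open>Fisher information of a POVM\<close>

definition fisher_term :: "complex^'n^'n \<Rightarrow> ('k \<Rightarrow> complex^'n) \<Rightarrow> ('k \<Rightarrow> complex^'n) \<Rightarrow> real" where
  "fisher_term M a b =
     (if 0 < pairing M a a then (2 * pairing M a b)^2 / pairing M a a else 0)"

lemma fisher_term_le:
  fixes a b :: "'k::finite \<Rightarrow> complex^'n"
  assumes "psd M"
  shows "fisher_term M a b \<le> 4 * pairing M b b"
proof (cases "0 < pairing M a a")
  case True
  then show ?thesis
    using pairing_cauchy_schwarz[OF assms, of a b]
    by (simp add: fisher_term_def field_simps power_mult_distrib)
next
  case False
  then show ?thesis
    using pairing_self_nonneg[OF assms, of b] by (simp add: fisher_term_def)
qed

lemma fisher_term_eq_iff: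
  fixes a b :: "'k::finite \<Rightarrow> complex^'n"
  assumes "psd M"
  shows "fisher_term M a b = 4 * pairing M b b
    \<longleftrightarrow> (\<exists>s::real. \<forall>k. M *v b k = s *\<^sub>R (M *v a k))"
proof (cases "0 < pairing M a a")
  case True
  then have "fisher_term M a b = 4 * pairing M b b
      \<longleftrightarrow> (pairing M a b)^2 = pairing M a a * pairing M b b"
    by (auto simp: fisher_term_def field_simps power_mult_distrib)
  then show ?thesis
    using pairing_cauchy_schwarz_eq_iff[OF assms True] by simp
next
  case False
  then have Ma: "M *v a k = 0" for k
    using pairing_self_nonneg[OF assms, of a] pairing_self_eq_0[OF assms] by force
  have "fisher_term M a b = 4 * pairing M b b \<longleftrightarrow> (\<forall>k. M *v b k = 0)"
    using False pairing_self_eq_0[OF assms, of b] by (auto simp: fisher_term_def pairing_def)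
  then show ?thesis
    by (simp add: Ma)
qed

lemma povm_psd: "is_povm N M \<Longrightarrow> m < N \<Longrightarrow> psd (M m)"
  unfolding is_povm_def by blast

lemma povm_sum_pairing:
  assumes "is_povm N M"
  shows "(\<Sum>m<N. pairing (M m) b b) = (\<Sum>k\<in>UNIV. b k \<bullet> b k)"
proof -
  have "(\<Sum>m<N. pairing (M m) b b) = (\<Sum>k\<in>UNIV. b k \<bullet> ((\<Sum>m<N. M m) *v b k))"
    unfolding pairing_def
    by (simp add: sum_matrix_vector_mult inner_sum_right sum.swap[of _ "{..<N}"])
  then show ?thesis
    using assms unfolding is_povm_def by simp
qed

lemma povm_fisher_term_sum_le:
  fixes a b :: "'k::finite \<Rightarrow> complex^'n"
  assumes "is_povm N M"
  shows "(\<Sum>m<N. fisher_term (M m) a b) \<le> 4 * (\<Sum>k\<in>UNIV. b k \<bullet> b k)"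
proof -
  have "(\<Sum>m<N. fisher_term (M m) a b) \<le> (\<Sum>m<N. 4 * pairing (M m) b b)"
    by (intro sum_mono fisher_term_le povm_psd[OF assms]) simp
  then show ?thesis
    by (simp add: povm_sum_pairing[OF assms] sum_distrib_left[symmetric])
qed

lemma povm_fisher_term_sum_eq_iff:
  fixes a b :: "'k::finite \<Rightarrow> complex^'n"
  assumes "is_povm N M"
  shows "(\<Sum>m<N. fisher_term (M m) a b) = 4 * (\<Sum>k\<in>UNIV. b k \<bullet> b k)
    \<longleftrightarrow> (\<forall>m<N. \<exists>s::real. \<forall>k. M m *v b k = s *\<^sub>R (M m *v a k))"
proof -
  have gap: "0 \<le> 4 * pairing (M m) b b - fisher_term (M m) a b" if "m < N" for m
    using fisher_term_le[OF povm_psd[OF assms that]] by simp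
  have "(\<Sum>m<N. fisher_term (M m) a b) = 4 * (\<Sum>k\<in>UNIV. b k \<bullet> b k)
      \<longleftrightarrow> (\<Sum>m<N. 4 * pairing (M m) b b - fisher_term (M m) a b) = 0"
    by (auto simp: sum_subtractf povm_sum_pairing[OF assms] sum_distrib_left[symmetric])
  also have "\<dots> \<longleftrightarrow> (\<forall>m<N. fisher_term (M m) a b = 4 * pairing (M m) b b)"
    using gap by (subst sum_nonneg_eq_0_iff) auto
  also have "\<dots> \<longleftrightarrow> (\<forall>m<N. \<exists>s::real. \<forall>k. M m *v b k = s *\<^sub>R (M m *v a k))"
    using fisher_term_eq_iff[OF povm_psd[OF assms]] by blast
  finally show ?thesis .
qed

lemma outcome_prob_eq_pairing:
  "outcome_prob Y psi M m t = pairing (M m) (\<lambda>k. Y t k *v psi) (\<lambda>k. Y t k *v psi)"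
  unfolding outcome_prob_def out_state_def pairing_def
  by (simp add: conjugate_ket_bra sum_matrix_mult trace_sum Re_trace_ket_bra_mult)

lemma C_Ups_eq_sum_inner: "C_Ups Y' psi = 4 * (\<Sum>k\<in>UNIV. (Y' k *v psi) \<bullet> (Y' k *v psi))"
  unfolding C_Ups_def by (simp add: conjugate_ket_bra trace_sum trace_ket_bra Re_cinner)

lemma outcome_prob_has_real_derivative:
  assumes Y': "\<And>k. ((\<lambda>t. Y t k) has_vector_derivative Y' k) (at \<theta>)" and "psd (M m)"
  shows "(outcome_prob Y psi M m has_real_derivative
      2 * pairing (M m) (\<lambda>k. Y \<theta> k *v psi) (\<lambda>k. Y' k *v psi)) (at \<theta>)"
proof -
  define a where "a t k = Y t k *v psi" for t k
  define b where "b k = Y' k *v psi" for k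
  have a': "((\<lambda>t. a t k) has_vector_derivative b k) (at \<theta>)" for k
    unfolding a_def b_def
    by (rule bounded_linear.has_vector_derivative[OF bounded_linear_matrix_vector_mult_left Y'])
  have "bounded_linear (\<lambda>x. M m *v x)"
    using matrix_vector_mul_linear linear_conv_bounded_linear by blast
  from bounded_linear.has_vector_derivative[OF this a']
  have "((\<lambda>t. \<Sum>k\<in>UNIV. a t k \<bullet> (M m *v a t k)) has_vector_derivative
      (\<Sum>k\<in>UNIV. a \<theta> k \<bullet> (M m *v b k) + b k \<bullet> (M m *v a \<theta> k))) (at \<theta>)"
    by (intro has_vector_derivative_sum bounded_bilinear.has_vector_derivative[OF bounded_bilinear_inner]
        a')
  moreover have "b k \<bullet> (M m *v a \<theta> k) = a \<theta> k \<bullet> (M m *v b k)" for k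
    using hermitian_inner_commute[OF psd_hermitian[OF \<open>psd (M m)\<close>], of "b k" "a \<theta> k"]
    by (simp add: inner_commute)
  ultimately have "((\<lambda>t. pairing (M m) (a t) (a t)) has_real_derivative 2 * pairing (M m) (a \<theta>) b) (at \<theta>)"
    unfolding has_real_derivative_iff_has_vector_derivative pairing_def
    by (simp add: sum_distrib_left flip: mult_2)
  then show ?thesis
    unfolding outcome_prob_eq_pairing[abs_def] a_def b_def .
qed

lemma fisher_info_eq_sum_fisher_term:
  assumes "is_povm N M" and "\<And>k. ((\<lambda>t. Y t k) has_vector_derivative Y' k) (at \<theta>)"
  shows "fisher_info Y psi N M \<theta> = (\<Sum>m<N. fisher_term (M m) (\<lambda>k. Y \<theta> k *v psi) (\<lambda>k. Y' k *v psi))"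
proof -
  have "deriv (outcome_prob Y psi M m) \<theta> = 2 * pairing (M m) (\<lambda>k. Y \<theta> k *v psi) (\<lambda>k. Y' k *v psi)"
    if "m < N" for m
    using outcome_prob_has_real_derivative[of Y Y' \<theta> M m psi, OF assms(2) povm_psd[OF assms(1) that]]
    by (rule DERIV_imp_deriv)
  then have "fisher_info Y psi N M \<theta>
      = (\<Sum>m\<in>{m\<in>{..<N}. 0 < pairing (M m) (\<lambda>k. Y \<theta> k *v psi) (\<lambda>k. Y \<theta> k *v psi)}.
           fisher_term (M m) (\<lambda>k. Y \<theta> k *v psi) (\<lambda>k. Y' k *v psi))"
    unfolding fisher_info_def outcome_prob_eq_pairing by (intro sum.cong) (auto simp: fisher_term_def)
  also have "\<dots> = (\<Sum>m<N. fisher_term (M m) (\<lambda>k. Y \<theta> k *v psi) (\<lambda>k. Y' k *v psi))"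
    by (rule sum.mono_neutral_left) (auto simp: fisher_term_def)
  finally show ?thesis .
qed

lemma fisher_info_le_C_Ups:
  assumes "is_povm N M" and "\<And>k. ((\<lambda>t. Y t k) has_vector_derivative Y' k) (at \<theta>)"
  shows "fisher_info Y psi N M \<theta> \<le> C_Ups Y' psi"
  unfolding fisher_info_eq_sum_fisher_term[OF assms] C_Ups_eq_sum_inner
  by (rule povm_fisher_term_sum_le[OF assms(1)])

lemma ex_fisher_info_eq_C_Ups_iff_ex_hermitian:
  assumes "\<And>k. ((\<lambda>t. Y t k) has_vector_derivative Y' k) (at \<theta>)"
  shows "(\<exists>N M. is_povm N M \<and> fisher_info Y psi N M \<theta> = C_Ups Y' psi)
    \<longleftrightarrow> (\<exists>L. hermitian L \<and> (\<forall>k. L *v (Y \<theta> k *v psi) = Y' k *v psi))"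
proof -
  have "fisher_info Y psi N M \<theta> = C_Ups Y' psi
      \<longleftrightarrow> (\<forall>m<N. \<exists>s::real. \<forall>k. M m *v (Y' k *v psi) = s *\<^sub>R (M m *v (Y \<theta> k *v psi)))"
    if "is_povm N M" for N M
    unfolding fisher_info_eq_sum_fisher_term[OF that assms] C_Ups_eq_sum_inner
    by (rule povm_fisher_term_sum_eq_iff[OF that])
  then show ?thesis
    unfolding ex_povm_proportional_iff_ex_hermitian[symmetric]
    by meson
qed

section \<open>Canonical Kraus operators\<close>

lemma has_vector_derivative_const_on_open:
  assumes "(f has_vector_derivative f') (at \<theta>)" "open T" "\<theta> \<in> T" "\<And>t. t \<in> T \<Longrightarrow> f t = c"
  shows "f' = 0"
proof -
  have "((\<lambda>t. c) has_vector_derivative f') (at \<theta>)"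
    by (rule has_vector_derivative_transform_within_open[OF assms(1-3)]) (simp add: assms(4))
  then show ?thesis
    using has_vector_derivative_const vector_derivative_unique_at by blast
qed

lemma orthonormal_frame_derivative_skew:
  fixes w :: "real \<Rightarrow> 'k \<Rightarrow> complex^'n" and w' :: "'k \<Rightarrow> complex^'n"
  assumes T: "open T" "\<theta> \<in> T"
    and orth: "\<And>t j k. t \<in> T \<Longrightarrow> cinner (w t j) (w t k) = (if j = k then 1 else 0)"
    and w': "\<And>k. ((\<lambda>t. w t k) has_vector_derivative w' k) (at \<theta>)"
  shows "cinner (w' j) (w \<theta> k) + cinner (w \<theta> j) (w' k) = 0"
  by (rule has_vector_derivative_const_on_open[OF cinner_has_vector_derivative[OF w' w'] T])
    (rule orth)

lemma real_derivative_eq_0_at_zero_of_nonneg: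
  fixes f :: "real \<Rightarrow> real"
  assumes "(f has_real_derivative l) (at x)" "open T" "x \<in> T"
    and "\<And>t. t \<in> T \<Longrightarrow> 0 \<le> f t" "f x = 0"
  shows "l = 0"
proof -
  obtain e where "e > 0" "ball x e \<subseteq> T"
    using assms(2,3) openE by blast
  then show ?thesis
    using assms(4,5) by (intro DERIV_local_min[OF assms(1) \<open>e > 0\<close>]) (auto simp: dist_real_def)
qed

text \<open>The scalar s is recovered as the inner product of w and a, which makes it differentiable
  without any regularity assumption on s itself.\<close>

lemma unit_scaled_path_derivative:
  fixes a w :: "real \<Rightarrow> 'a::real_inner" and s :: "real \<Rightarrow> real"
  assumes T: "open T" "\<theta> \<in> T"
    and a: "\<And>t. t \<in> T \<Longrightarrow> a t = s t *\<^sub>R w t" and unit: "\<And>t. t \<in> T \<Longrightarrow> w t \<bullet> w t = 1"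
    and s: "\<And>t. t \<in> T \<Longrightarrow> 0 \<le> s t"
    and a': "(a has_vector_derivative a') (at \<theta>)" and w': "(w has_vector_derivative w') (at \<theta>)"
  obtains d where "a' = d *\<^sub>R w \<theta> + s \<theta> *\<^sub>R w'" and "s \<theta> = 0 \<Longrightarrow> d = 0"
proof -
  define d where "d = w \<theta> \<bullet> a' + w' \<bullet> a \<theta>"
  have "((\<lambda>t. w t \<bullet> a t) has_vector_derivative d) (at \<theta>)"
    unfolding d_def by (rule bounded_bilinear.has_vector_derivative[OF bounded_bilinear_inner w' a'])
  then have "(s has_vector_derivative d) (at \<theta>)"
    by (rule has_vector_derivative_transform_within_open[OF _ T]) (simp add: a unit)
  then have s': "(s has_real_derivative d) (at \<theta>)"
    by (simp add: has_real_derivative_iff_has_vector_derivative)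
  have "((\<lambda>t. s t *\<^sub>R w t) has_vector_derivative (s \<theta> *\<^sub>R w' + d *\<^sub>R w \<theta>)) (at \<theta>)"
    by (rule has_vector_derivative_scaleR[OF s' w'])
  then have "(a has_vector_derivative (s \<theta> *\<^sub>R w' + d *\<^sub>R w \<theta>)) (at \<theta>)"
    by (rule has_vector_derivative_transform_within_open[OF _ T]) (simp add: a)
  then have "a' = d *\<^sub>R w \<theta> + s \<theta> *\<^sub>R w'"
    using vector_derivative_unique_at[OF a'] by (simp add: add.commute)
  moreover have "s \<theta> = 0 \<Longrightarrow> d = 0"
    using real_derivative_eq_0_at_zero_of_nonneg[OF s' T s] by blast
  ultimately show ?thesis
    using that by blast
qed

lemma scaled_frame_gram_symmetric_iff:
  fixes w w' a b :: "'k \<Rightarrow> complex^'n" and s d :: "'k \<Rightarrow> real"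
  assumes orth: "\<And>j k. cinner (w j) (w k) = (if j = k then 1 else 0)"
    and skew: "\<And>j k. cinner (w' j) (w k) + cinner (w j) (w' k) = 0"
    and a: "\<And>k. a k = s k *\<^sub>R w k" and b: "\<And>k. b k = d k *\<^sub>R w k + s k *\<^sub>R w' k"
  shows "(\<forall>j k. cinner (a j) (b k) = cinner (b j) (a k))
    \<longleftrightarrow> (\<forall>j k. s j \<noteq> 0 \<and> s k \<noteq> 0 \<longrightarrow> cinner (w' j) (w k) = 0)"
proof -
  have "cinner (a j) (b k) - cinner (b j) (a k) = - 2 * of_real (s j * s k) * cinner (w' j) (w k)"
    for j k
  proof -
    have "cinner (w j) (w' k) = - cinner (w' j) (w k)"
      using skew[of j k] by (simp add: eq_neg_iff_add_eq_0 add.commute)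
    then show ?thesis
      by (simp add: a b cinner_add_left cinner_add_right cinner_scaleR_left cinner_scaleR_right orth
          algebra_simps)
  qed
  then show ?thesis
    by (metis (no_types, lifting) eq_iff_diff_eq_0 mult_eq_0_iff neg_equal_0_iff_equal of_real_eq_0_iff
        zero_neq_numeral)
qed

lemma canonical_kraus_ex_hermitian_iff:
  fixes Y :: "real \<Rightarrow> 'n \<Rightarrow> complex^'n^'n" and w :: "real \<Rightarrow> 'n \<Rightarrow> complex^'n"
  assumes T: "open T" "\<theta> \<in> T"
    and Y': "\<And>k. ((\<lambda>t. Y t k) has_vector_derivative Y' k) (at \<theta>)"
    and Y_w: "\<And>t k. t \<in> T \<Longrightarrow> Y t k *v psi = complex_of_real (sqrt (p t k)) *s w t k"
    and orth: "\<And>t j k. t \<in> T \<Longrightarrow> cinner (w t j) (w t k) = (if j = k then 1 else 0)"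
    and w': "\<And>k. ((\<lambda>t. w t k) has_vector_derivative w' k) (at \<theta>)"
    and p: "\<And>t k. t \<in> T \<Longrightarrow> 0 \<le> p t k"
  shows "(\<exists>L. hermitian L \<and> (\<forall>k. L *v (Y \<theta> k *v psi) = Y' k *v psi))
    \<longleftrightarrow> (\<forall>j k. 0 < p \<theta> j \<and> 0 < p \<theta> k \<longrightarrow> cinner (w' j) (w \<theta> k) = 0)"
proof -
  have a: "Y t k *v psi = sqrt (p t k) *\<^sub>R w t k" if "t \<in> T" for t k
    using Y_w[OF that] by (simp add: scaleR_eq_smult)
  have unit: "w t k \<bullet> w t k = 1" if "t \<in> T" for t k
    using orth[OF that, of k k] Re_cinner[of "w t k" "w t k"] by simp
  have "\<exists>d. Y' k *v psi = d *\<^sub>R w \<theta> k + sqrt (p \<theta> k) *\<^sub>R w' k \<and> (sqrt (p \<theta> k) = 0 \<longrightarrow> d = 0)"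
    for k
    by (rule unit_scaled_path_derivative[OF T, where a="\<lambda>t. Y t k *v psi" and s="\<lambda>t. sqrt (p t k)"
          and w="\<lambda>t. w t k", OF a unit _
          bounded_linear.has_vector_derivative[OF bounded_linear_matrix_vector_mult_left Y'] w'])
      (auto simp: p)
  then obtain d where b: "\<And>k. Y' k *v psi = d k *\<^sub>R w \<theta> k + sqrt (p \<theta> k) *\<^sub>R w' k"
    and d: "\<And>k. sqrt (p \<theta> k) = 0 \<Longrightarrow> d k = 0"
    by metis
  have "(\<exists>L. hermitian L \<and> (\<forall>k. L *v (Y \<theta> k *v psi) = Y' k *v psi))
      \<longleftrightarrow> (\<forall>j k. cinner (Y \<theta> j *v psi) (Y' k *v psi) = cinner (Y' j *v psi) (Y \<theta> k *v psi))"
    by (rule ex_hermitian_map_iff[OF orth[OF T(2)] a[OF T(2)]]) (simp add: b d)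
  also have "\<dots> \<longleftrightarrow> (\<forall>j k. sqrt (p \<theta> j) \<noteq> 0 \<and> sqrt (p \<theta> k) \<noteq> 0 \<longrightarrow> cinner (w' j) (w \<theta> k) = 0)"
    by (rule scaled_frame_gram_symmetric_iff[OF orth[OF T(2)]
          orthonormal_frame_derivative_skew[OF T orth w'] a[OF T(2)] b])
  also have "\<dots> \<longleftrightarrow> (\<forall>j k. 0 < p \<theta> j \<and> 0 < p \<theta> k \<longrightarrow> cinner (w' j) (w \<theta> k) = 0)"
    using p[OF T(2)] by (simp add: order_less_le)
  finally show ?thesis .
qed

text \<open>Of \<open>p_dich\<close> only the nonnegativity of p is used: where \<open>p\<^sub>k\<close> vanishes, \<open>\<surd>p\<^sub>k\<close> has an
  interior minimum, so its derivative vanishes too.\<close>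

theorem theorem2p6:
  fixes \<Theta> :: "real set"
    and psi0 :: "complex^'n"
    and Y Y' :: "real \<Rightarrow> 'n \<Rightarrow> complex^'n^'n"
    and p :: "real \<Rightarrow> 'n \<Rightarrow> real"
    and w w' :: "real \<Rightarrow> 'n \<Rightarrow> complex^'n"
  assumes Theta: "open \<Theta>" "is_interval \<Theta>"
    and psi0_norm: "cinner psi0 psi0 = 1"
    and Y_deriv: "\<And>\<theta> k. \<theta> \<in> \<Theta> \<Longrightarrow> ((\<lambda>t. Y t k) has_vector_derivative Y' \<theta> k) (at \<theta>)"
    and Y_complete: "\<And>\<theta>. \<theta> \<in> \<Theta> \<Longrightarrow> (\<Sum>k\<in>UNIV. mat_adj (Y \<theta> k) ** Y \<theta> k) = mat 1"
    and Y_canonical: "\<And>\<theta> j k. \<theta> \<in> \<Theta> \<Longrightarrow>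
        trace (Y \<theta> k ** ket_bra psi0 psi0 ** mat_adj (Y \<theta> j)) = (if j = k then complex_of_real (p \<theta> k) else 0)"
    and Y_w: "\<And>\<theta> k. \<theta> \<in> \<Theta> \<Longrightarrow> Y \<theta> k *v psi0 = complex_of_real (sqrt (p \<theta> k)) *s w \<theta> k"
    and w_orth: "\<And>\<theta> j k. \<theta> \<in> \<Theta> \<Longrightarrow> cinner (w \<theta> j) (w \<theta> k) = (if j = k then 1 else 0)"
    and w_deriv: "\<And>\<theta> k. \<theta> \<in> \<Theta> \<Longrightarrow> ((\<lambda>t. w t k) has_vector_derivative w' \<theta> k) (at \<theta>)"
    and p_dich: "\<And>k. (\<forall>\<theta>\<in>\<Theta>. p \<theta> k = 0) \<or> (\<forall>\<theta>\<in>\<Theta>. p \<theta> k > 0)"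
  shows "\<forall>\<theta>\<in>\<Theta>.
           (\<forall>N M. is_povm N M \<longrightarrow> fisher_info Y psi0 N M \<theta> \<le> C_Ups (Y' \<theta>) psi0) \<and>
           ((\<exists>N M. is_povm N M \<and> fisher_info Y psi0 N M \<theta> = C_Ups (Y' \<theta>) psi0) \<longleftrightarrow>
            (\<forall>j k. p \<theta> j > 0 \<and> p \<theta> k > 0 \<longrightarrow> cinner (w' \<theta> j) (w \<theta> k) = 0))"
proof (intro ballI conjI allI impI)
  fix \<theta> assume \<theta>: "\<theta> \<in> \<Theta>"
  have p_nonneg: "0 \<le> p t k" if "t \<in> \<Theta>" for t k
    using p_dich[of k] that by (auto intro: less_imp_le)
  show "fisher_info Y psi0 N M \<theta> \<le> C_Ups (Y' \<theta>) psi0" if "is_povm N M" for N M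
    by (rule fisher_info_le_C_Ups[OF that Y_deriv[OF \<theta>]])
  show "(\<exists>N M. is_povm N M \<and> fisher_info Y psi0 N M \<theta> = C_Ups (Y' \<theta>) psi0) \<longleftrightarrow>
      (\<forall>j k. p \<theta> j > 0 \<and> p \<theta> k > 0 \<longrightarrow> cinner (w' \<theta> j) (w \<theta> k) = 0)"
    unfolding ex_fisher_info_eq_C_Ups_iff_ex_hermitian[OF Y_deriv[OF \<theta>]]
    by (rule canonical_kraus_ex_hermitian_iff[OF Theta(1) \<theta> Y_deriv[OF \<theta>] Y_w w_orth w_deriv[OF \<theta>]
          p_nonneg])
qed

end
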